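(* Let $A\in\mathbb R^{n\times n}$ be symmetric with $A\not\succeq0$, $a,x_0,b_1,\ldots,b_p\in\mathbb R^n$, $u,\beta_1,\ldots,\beta_p\in\mathbb R$. Consider \[ ({\rm ETRS})\quad \min_{x\in\mathbb R^n}\ x^TAx+a^Tx\quad\text{s.t.}\quad \|x-x_0\|^2\le u,\quad b_i^Tx\le\beta_i,\ i=1,\ldots,p. \] Suppose \[ \dim\Big({\rm span}\big(\{b_1,\ldots,b_p\}\cup\mathcal R(A-\lambda_{\min}(A)I_n)\big)\Big)\le n-1. \] Then (ETRS) is equivalent to (in particular has the same optimal value as) the convex problem \[ \min_{x}\ x^T(A-\lambda_{\min}(A)I_n)x+a^Tx+\lambda_{\min}(A)(u+2x^Tx_0-\|x_0\|^2)\quad\text{s.t.}\quad \|x-x_0\|^2\le u,\quad b_i^Tx\le\beta_i,\ i=1,\ldots,p. \]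
   Context: $\lambda_{\min}(A)$ is the smallest eigenvalue of $A$; $\mathcal R(\cdot)$ denotes the range of a matrix; $I_n$ is the identity; $\|\cdot\|$ is the Euclidean norm. *)

theory Defs
  imports "HOL-Analysis.Analysis"
begin

definition psd :: "real^'n^'n \<Rightarrow> bool" where
  "psd A \<longleftrightarrow> (\<forall>x. 0 \<le> x \<bullet> (A *v x))"

definition mat_eigenvalue :: "real^'n^'n \<Rightarrow> real \<Rightarrow> bool" where
  "mat_eigenvalue A l \<longleftrightarrow> (\<exists>v. v \<noteq> 0 \<and> A *v v = l *\<^sub>R v)"

definition lambda_min :: "real^'n^'n \<Rightarrow> real" where
  "lambda_min A = Min {l. mat_eigenvalue A l}"

end

theory Submission
  imports Defs
begin

text \<open>
  Since \<open>A\<close> is not positive semidefinite, \<open>\<lambda> = \<lambda>\<^sub>m\<^sub>i\<^sub>n(A) < 0\<close>, and the two objectives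
  differ by \<open>\<lambda> (\<parallel>x - x\<^sub>0\<parallel>\<^sup>2 - u) \<ge> 0\<close> on the feasible set, so the convex one is a lower bound.
  Conversely, the dimension condition yields a direction \<open>v \<noteq> 0\<close> orthogonal to every
  \<open>b\<^sub>i\<close> and to the range of \<open>A - \<lambda>I\<close>, hence in its kernel. Along the line
  \<open>x + tv\<close> the linear constraints are unchanged and the convex objective is affine, so
  moving from any feasible \<open>x\<close> in the non-increasing direction until the ball constraint
  becomes active gives a feasible point where both objectives agree and are at most the convex
  objective at \<open>x\<close>.
\<close>

lemma symmetric_matrix_inner_swap:
  fixes A :: "real^'n^'n"
  assumes "transpose A = A"
  shows "x \<bullet> (A *v y) = (A *v x) \<bullet> y"
  by (metis assms dot_lmul_matrix transpose_matrix_vector)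

lemma matrix_vector_mult_shift:
  fixes A :: "real^'n^'n"
  shows "(A - c *\<^sub>R mat 1) *v x = A *v x - c *\<^sub>R x"
  by (simp add: matrix_vector_mult_diff_rdistrib scaleR_matrix_vector_assoc[symmetric])

lemma symmetric_shift_inner_swap:
  fixes A :: "real^'n^'n"
  assumes "transpose A = A"
  shows "x \<bullet> ((A - c *\<^sub>R mat 1) *v y) = ((A - c *\<^sub>R mat 1) *v x) \<bullet> y"
  using symmetric_matrix_inner_swap[OF assms, of x y]
  by (simp add: matrix_vector_mult_shift inner_diff_right inner_diff_left inner_commute)

lemma finite_eigenvalues_symmetric:
  fixes A :: "real^'n^'n"
  assumes symA: "transpose A = A"
  shows "finite {l. mat_eigenvalue A l}"
proof -
  define S where "S = {l. mat_eigenvalue A l}"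
  define ev where "ev l = (SOME v. v \<noteq> 0 \<and> A *v v = l *\<^sub>R v)" for l
  have ev: "ev l \<noteq> 0 \<and> A *v ev l = l *\<^sub>R ev l" if "l \<in> S" for l
  proof -
    from that obtain v where "v \<noteq> 0 \<and> A *v v = l *\<^sub>R v"
      unfolding S_def mat_eigenvalue_def by auto
    then show ?thesis unfolding ev_def by (rule someI)
  qed
  have orth: "ev l \<bullet> ev k = 0" if "l \<in> S" "k \<in> S" "l \<noteq> k" for l k
  proof -
    have "l * (ev l \<bullet> ev k) = (A *v ev l) \<bullet> ev k" using ev[OF that(1)] by simp
    also have "\<dots> = ev l \<bullet> (A *v ev k)" using symmetric_matrix_inner_swap[OF symA] by simp
    also have "\<dots> = k * (ev l \<bullet> ev k)" using ev[OF that(2)] by simp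
    finally show ?thesis using that(3) by simp
  qed
  have "inj_on ev S"
    by (rule inj_onI) (metis orth ev inner_eq_zero_iff)
  moreover have "independent (ev ` S)"
    by (rule pairwise_orthogonal_independent)
      (use orth ev in \<open>auto simp: pairwise_def orthogonal_def\<close>)
  ultimately show ?thesis
    using finiteI_independent finite_imageD S_def by blast
qed

lemma psd_form_zero_imp_kernel:
  fixes B :: "real^'n^'n"
  assumes symB: "\<And>x y. x \<bullet> (B *v y) = (B *v x) \<bullet> y"
    and psdB: "\<And>y. 0 \<le> y \<bullet> (B *v y)"
    and zero: "z \<bullet> (B *v z) = 0"
  shows "B *v z = 0"
proof (rule ccontr)
  define w where "w = B *v z"
  define c where "c = w \<bullet> (B *v w)"
  assume "B *v z \<noteq> 0"
  then have ww: "w \<bullet> w > 0" by (simp add: w_def)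
  have c0: "c \<ge> 0" using psdB c_def by simp
  have expand: "(z - t *\<^sub>R w) \<bullet> (B *v (z - t *\<^sub>R w)) = - 2 * t * (w \<bullet> w) + t\<^sup>2 * c" for t
    using symB[of z w] symB[of w z] zero
    by (simp add: matrix_vector_mult_diff_distrib matrix_vector_mult_scaleR inner_diff_left
        inner_diff_right w_def c_def power2_eq_square inner_commute algebra_simps)
  \<comment> \<open>The form is negative at \<open>z - t w\<close> for small \<open>t > 0\<close>.\<close>
  define t where "t = (w \<bullet> w) / (c + 1)"
  have "t > 0" using ww c0 by (simp add: t_def)
  moreover have "t * c \<le> w \<bullet> w"
    using ww c0 by (simp add: t_def field_simps)
  moreover have "0 \<le> t * (- 2 * (w \<bullet> w) + t * c)"
    using psdB[of "z - t *\<^sub>R w"] expand[of t] by (simp add: power2_eq_square algebra_simps)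
  ultimately have "0 \<le> - 2 * (w \<bullet> w) + t * c"
    by (simp add: zero_le_mult_iff)
  with \<open>t * c \<le> w \<bullet> w\<close> ww show False by linarith
qed

lemma quadratic_form_scaleR:
  fixes A :: "real^'n^'n"
  shows "(c *\<^sub>R z) \<bullet> (A *v (c *\<^sub>R z)) = c\<^sup>2 * (z \<bullet> (A *v z))"
  by (simp add: matrix_vector_mult_scaleR power2_eq_square)

lemma symmetric_rayleigh_min_eigenvalue:
  fixes A :: "real^'n^'n"
  assumes symA: "transpose A = A"
  obtains m where "mat_eigenvalue A m" "\<And>y. m * (y \<bullet> y) \<le> y \<bullet> (A *v y)"
proof -
  define q where "q x = x \<bullet> (A *v x)" for x :: "real^'n"
  have "continuous_on (sphere 0 1) q"
    unfolding q_def
    by (intro continuous_intros bounded_linear.continuous_on[OF matrix_vector_mul_bounded_linear])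
  moreover have "sphere (0::real^'n) 1 \<noteq> {}" by simp
  ultimately obtain z where z: "z \<in> sphere (0::real^'n) 1"
    and zmin: "\<And>y. y \<in> sphere 0 1 \<Longrightarrow> q z \<le> q y"
    using continuous_attains_inf[OF compact_sphere] by blast
  define m where "m = q z"
  have bound: "m * (y \<bullet> y) \<le> q y" for y
  proof (cases "y = 0")
    case False
    have "m \<le> q ((1 / norm y) *\<^sub>R y)" using zmin False by (simp add: m_def)
    also have "\<dots> = q y / (y \<bullet> y)"
      unfolding q_def quadratic_form_scaleR by (simp add: power2_norm_eq_inner field_simps)
    finally show ?thesis using False by (simp add: field_simps)
  qed (simp add: q_def)
  define B where "B = A - m *\<^sub>R mat 1"
  have "B *v z = 0"
  proof (rule psd_form_zero_imp_kernel)
    show "x \<bullet> (B *v y) = (B *v x) \<bullet> y" for x y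
      unfolding B_def by (rule symmetric_shift_inner_swap[OF symA])
    show "0 \<le> y \<bullet> (B *v y)" for y
      using bound[of y] by (simp add: B_def matrix_vector_mult_shift q_def inner_diff_right)
    have "z \<bullet> z = 1" using z by (simp add: dot_square_norm)
    then show "z \<bullet> (B *v z) = 0"
      by (simp add: B_def matrix_vector_mult_shift inner_diff_right m_def q_def)
  qed
  then have "mat_eigenvalue A m"
    using z unfolding mat_eigenvalue_def B_def matrix_vector_mult_shift
    by (intro exI[of _ z]) auto
  with bound show ?thesis using that unfolding q_def by blast
qed

lemma lambda_min_negative:
  fixes A :: "real^'n^'n"
  assumes symA: "transpose A = A" and notpsd: "\<not> psd A"
  shows "lambda_min A < 0"
proof -
  obtain m where eig: "mat_eigenvalue A m" and bound: "\<And>y. m * (y \<bullet> y) \<le> y \<bullet> (A *v y)"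
    using symmetric_rayleigh_min_eigenvalue[OF symA] by blast
  obtain y where "y \<bullet> (A *v y) < 0" using notpsd unfolding psd_def by (auto simp: not_le)
  with bound[of y] have "m * (y \<bullet> y) < 0" by linarith
  then have "m < 0" using inner_ge_zero[of y] by (auto simp: mult_less_0_iff)
  moreover have "lambda_min A \<le> m"
    unfolding lambda_min_def using eig finite_eigenvalues_symmetric[OF symA] by (intro Min_le) auto
  ultimately show ?thesis by simp
qed

lemma exists_kernel_vector_orthogonal:
  fixes B :: "real^'n^'n"
  assumes symB: "\<And>x y. x \<bullet> (B *v y) = (B *v x) \<bullet> y"
    and dim: "dim (span (S \<union> range ((*v) B))) \<le> CARD('n) - 1"
  obtains v where "v \<noteq> 0" "B *v v = 0" "\<And>s. s \<in> S \<Longrightarrow> s \<bullet> v = 0"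
proof -
  define W where "W = S \<union> range ((*v) B)"
  have "dim W \<le> CARD('n) - 1" using dim by (simp add: W_def dim_span)
  moreover have "CARD('n) > 0" by simp
  ultimately have "dim W < DIM(real^'n)" unfolding DIM_cart DIM_real by linarith
  then obtain v where "v \<noteq> 0" and vo: "\<And>y. y \<in> W \<Longrightarrow> v \<bullet> y = 0"
    using orthogonal_to_subspace_exists span_base unfolding orthogonal_def by metis
  have "s \<bullet> v = 0" if "s \<in> S" for s
    using vo[of s] that by (simp add: W_def inner_commute)
  moreover have "(B *v v) \<bullet> (B *v v) = 0"
    using vo[of "B *v (B *v v)"] symB[of v "B *v v"] by (simp add: W_def)
  ultimately show ?thesis using that \<open>v \<noteq> 0\<close> by simp
qed

lemma exists_ray_point_on_sphere:
  fixes x x0 v :: "'a::real_inner"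
  assumes v: "v \<noteq> 0" and x: "(norm (x - x0))\<^sup>2 \<le> u"
  obtains t where "t \<ge> 0" "(norm (x + t *\<^sub>R v - x0))\<^sup>2 = u"
proof -
  define al where "al = v \<bullet> v"
  define be where "be = v \<bullet> (x - x0)"
  define ga where "ga = (norm (x - x0))\<^sup>2 - u"
  define s where "s = sqrt (be\<^sup>2 - al * ga)"
  \<comment> \<open>the larger root of \<open>al t\<^sup>2 + 2 be t + ga\<close>, which is nonnegative because \<open>ga \<le> 0\<close>\<close>
  define t where "t = (s - be) / al"
  have al: "al > 0" using v by (simp add: al_def)
  have "al * ga \<le> 0" using x al by (simp add: ga_def mult_nonneg_nonpos)
  then have D: "be\<^sup>2 \<le> be\<^sup>2 - al * ga" by linarith
  then have s2: "s\<^sup>2 = be\<^sup>2 - al * ga"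
    unfolding s_def using zero_le_power2[of be] by (intro real_sqrt_pow2) linarith
  have "\<bar>be\<bar> \<le> s"
    unfolding s_def using real_sqrt_le_mono[OF D] by simp
  then have "t \<ge> 0" using al by (simp add: t_def)
  have alt: "al * t = s - be" using al by (simp add: t_def)
  have "al * (al * t\<^sup>2 + 2 * be * t + ga) = (al * t)\<^sup>2 + 2 * be * (al * t) + al * ga"
    by (simp add: power2_eq_square algebra_simps)
  also have "\<dots> = s\<^sup>2 - be\<^sup>2 + al * ga"
    unfolding alt by (simp add: power2_eq_square algebra_simps)
  finally have "al * t\<^sup>2 + 2 * be * t + ga = 0" using s2 al by simp
  moreover have "(norm (x + t *\<^sub>R v - x0))\<^sup>2 = al * t\<^sup>2 + 2 * be * t + (norm (x - x0))\<^sup>2"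
  proof -
    have "(norm (x + t *\<^sub>R v - x0))\<^sup>2 = ((x - x0) + t *\<^sub>R v) \<bullet> ((x - x0) + t *\<^sub>R v)"
      by (simp add: power2_norm_eq_inner algebra_simps)
    also have "\<dots> = (x - x0) \<bullet> (x - x0) + 2 * t * (v \<bullet> (x - x0)) + t\<^sup>2 * (v \<bullet> v)"
      by (simp add: inner_add_left inner_add_right inner_commute power2_eq_square)
    finally show ?thesis by (simp add: al_def be_def power2_norm_eq_inner)
  qed
  ultimately show ?thesis using that \<open>t \<ge> 0\<close> by (simp add: ga_def)
qed

lemma exists_line_point_on_sphere_signed:
  fixes x x0 v :: "'a::real_inner"
  assumes "v \<noteq> 0" "(norm (x - x0))\<^sup>2 \<le> u"
  obtains t where "t * c \<le> 0" "(norm (x + t *\<^sub>R v - x0))\<^sup>2 = u"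
proof (cases "c \<ge> 0")
  case True
  obtain t where "t \<ge> 0" "(norm (x + t *\<^sub>R (- v) - x0))\<^sup>2 = u"
    using exists_ray_point_on_sphere assms by (metis neg_equal_0_iff_equal)
  then show ?thesis using that[of "- t"] True by (simp add: mult_nonneg_nonneg)
next
  case False
  obtain t where "t \<ge> 0" "(norm (x + t *\<^sub>R v - x0))\<^sup>2 = u"
    using exists_ray_point_on_sphere assms by metis
  then show ?thesis using that[of t] False by (simp add: mult_nonneg_nonpos)
qed

lemma cInf_image_eq_of_le_of_dominated:
  fixes f g :: "'a \<Rightarrow> real"
  assumes bdd: "bdd_below (f ` F)"
    and le: "\<And>x. x \<in> F \<Longrightarrow> g x \<le> f x"
    and dom: "\<And>x. x \<in> F \<Longrightarrow> \<exists>y\<in>F. f y \<le> g x"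
  shows "Inf (f ` F) = Inf (g ` F)"
proof (cases "F = {}")
  case False
  obtain L where L: "\<And>x. x \<in> F \<Longrightarrow> L \<le> f x" using bdd by (auto simp: bdd_below_def)
  have "bdd_below (g ` F)"
    by (rule bdd_belowI2[of _ L]) (metis L dom order_trans)
  with False bdd show ?thesis
    by (intro antisym cInf_mono) (auto dest: le dom)
qed simp

lemma compact_ball_polyhedron:
  fixes x0 :: "'a::euclidean_space"
  shows "compact {x. (norm (x - x0))\<^sup>2 \<le> u \<and> (\<forall>i\<in>I. b i \<bullet> x \<le> beta i)}" (is "compact ?F")
proof -
  have "?F = {x. (norm (x - x0))\<^sup>2 \<le> u} \<inter> (\<Inter>i\<in>I. {x. b i \<bullet> x \<le> beta i})" by auto
  moreover have "closed {x. (norm (x - x0))\<^sup>2 \<le> u}" "closed {x. b i \<bullet> x \<le> beta i}" for i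
    by (intro closed_Collect_le continuous_intros)+
  ultimately have "closed ?F" by (auto intro!: closed_INT)
  moreover have "bounded ?F"
  proof (rule bounded_subset[OF bounded_cball])
    show "?F \<subseteq> cball x0 (sqrt u)"
      by (auto simp: dist_norm norm_minus_commute intro: real_le_rsqrt)
  qed
  ultimately show ?thesis by (simp add: compact_eq_bounded_closed)
qed

lemma objective_eq_shifted:
  fixes A :: "real^'n^'n"
  shows "x \<bullet> (A *v x) + a \<bullet> x
       = x \<bullet> ((A - l *\<^sub>R mat 1) *v x) + a \<bullet> x + l * (u + 2 * (x \<bullet> x0) - (norm x0)\<^sup>2)
         + l * ((norm (x - x0))\<^sup>2 - u)"
  unfolding matrix_vector_mult_shift
  by (simp add: power2_norm_eq_inner inner_diff_left inner_diff_right algebra_simps inner_commute)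

lemma shifted_objective_along_kernel:
  fixes B :: "real^'n^'n"
  assumes symB: "\<And>x y. x \<bullet> (B *v y) = (B *v x) \<bullet> y" and Bv: "B *v v = 0"
  shows "(x + t *\<^sub>R v) \<bullet> (B *v (x + t *\<^sub>R v)) + a \<bullet> (x + t *\<^sub>R v)
           + l * (u + 2 * ((x + t *\<^sub>R v) \<bullet> x0) - (norm x0)\<^sup>2)
       = x \<bullet> (B *v x) + a \<bullet> x + l * (u + 2 * (x \<bullet> x0) - (norm x0)\<^sup>2)
           + t * (a \<bullet> v + 2 * l * (v \<bullet> x0))"
  using symB[of v x] Bv
  by (simp add: matrix_vector_right_distrib matrix_vector_mult_scaleR inner_add_left
      inner_add_right algebra_simps inner_commute)

lemma ball_constrained_inf_eq_shifted:
  fixes A :: "real^'n^'n" and x0 :: "real^'n" and u :: real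
    and b :: "'i \<Rightarrow> real^'n" and beta :: "'i \<Rightarrow> real"
  assumes symA: "transpose A = A" and l: "l \<le> 0"
    and v: "v \<noteq> 0" "(A - l *\<^sub>R mat 1) *v v = 0" "\<And>i. i \<in> I \<Longrightarrow> b i \<bullet> v = 0"
  defines "F \<equiv> {x. (norm (x - x0))\<^sup>2 \<le> u \<and> (\<forall>i\<in>I. b i \<bullet> x \<le> beta i)}"
  shows "Inf ((\<lambda>x. x \<bullet> (A *v x) + a \<bullet> x) ` F)
       = Inf ((\<lambda>x. x \<bullet> ((A - l *\<^sub>R mat 1) *v x) + a \<bullet> x
                  + l * (u + 2 * (x \<bullet> x0) - (norm x0)\<^sup>2)) ` F)"
    (is "Inf (?f ` F) = Inf (?g ` F)")
proof (rule cInf_image_eq_of_le_of_dominated)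
  have "continuous_on F ?f"
    by (intro continuous_intros bounded_linear.continuous_on[OF matrix_vector_mul_bounded_linear])
  moreover have "compact F"
    unfolding F_def by (rule compact_ball_polyhedron)
  ultimately show "bdd_below (?f ` F)"
    by (intro bounded_imp_bdd_below compact_imp_bounded compact_continuous_image)
  show "?g x \<le> ?f x" if "x \<in> F" for x
  proof -
    have "0 \<le> l * ((norm (x - x0))\<^sup>2 - u)"
      using that l by (simp add: F_def mult_nonpos_nonpos)
    then show ?thesis
      unfolding objective_eq_shifted[of x A a l u x0] by linarith
  qed
  show "\<exists>y\<in>F. ?f y \<le> ?g x" if x: "x \<in> F" for x
  proof -
    define c where "c = a \<bullet> v + 2 * l * (v \<bullet> x0)"
    have "(norm (x - x0))\<^sup>2 \<le> u" using x by (simp add: F_def)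
    then obtain t where t: "t * c \<le> 0" "(norm (x + t *\<^sub>R v - x0))\<^sup>2 = u"
      by (rule exists_line_point_on_sphere_signed[OF v(1)])
    have "x + t *\<^sub>R v \<in> F"
      using x t(2) v(3) by (simp add: F_def inner_add_right)
    moreover have "?f (x + t *\<^sub>R v) = ?g (x + t *\<^sub>R v)"
      unfolding objective_eq_shifted[of "x + t *\<^sub>R v" A a l u x0] t(2) by simp
    moreover have "?g (x + t *\<^sub>R v) = ?g x + t * c"
      unfolding c_def
      by (rule shifted_objective_along_kernel[OF symmetric_shift_inner_swap[OF symA] v(2)])
    ultimately show ?thesis
      using t(1) by (metis add_le_same_cancel1)
  qed
qed

theorem corollary2:
  fixes A :: "real^'n^'n" and a x0 :: "real^'n" and u :: real
    and p :: nat and b :: "nat \<Rightarrow> real^'n" and beta :: "nat \<Rightarrow> real"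
  assumes symA: "transpose A = A"
    and notpsd: "\<not> psd A"
    and dimcond: "dim (span (b ` {1..p} \<union> range (\<lambda>x. (A - lambda_min A *\<^sub>R mat 1) *v x)))
                  \<le> CARD('n) - 1"
  shows "(let F = {x. (norm (x - x0))\<^sup>2 \<le> u \<and> (\<forall>i\<in>{1..p}. b i \<bullet> x \<le> beta i)}
          in Inf ((\<lambda>x. x \<bullet> (A *v x) + a \<bullet> x) ` F)
           = Inf ((\<lambda>x. x \<bullet> ((A - lambda_min A *\<^sub>R mat 1) *v x) + a \<bullet> x
                  + lambda_min A * (u + 2 * (x \<bullet> x0) - (norm x0)\<^sup>2)) ` F))"
proof -
  obtain v where v: "v \<noteq> 0" "(A - lambda_min A *\<^sub>R mat 1) *v v = 0"
    and vb: "\<And>s. s \<in> b ` {1..p} \<Longrightarrow> s \<bullet> v = 0"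
    by (rule exists_kernel_vector_orthogonal[OF symmetric_shift_inner_swap[OF symA] dimcond]) (rule that)
  have vb': "\<And>i. i \<in> {1..p} \<Longrightarrow> b i \<bullet> v = 0" using vb by simp
  have "lambda_min A \<le> 0"
    using lambda_min_negative[OF symA notpsd] by simp
  then show ?thesis
    unfolding Let_def by (rule ball_constrained_inf_eq_shifted[OF symA _ v vb'])
qed

end
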